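(* Let $I$ be an interval with $1\in I\subset\,]0,\infty[$. Let $\lambda,\mu,\tilde\mu\in C^1(I\times\mathbb{R})$ be $1$-periodic in $r$, and let $\psi\in C^1(\mathbb{R})$, $\overset{\circ}{\phi}\in C^2(\mathbb{R})$ be $1$-periodic; write $\overset{\circ}{\lambda}=\lambda(1,\cdot)$, $\overset{\circ}{\mu}=\mu(1,\cdot)$. Define the operators $D^{\pm}=e^{-\mu}\partial_t\pm e^{-\lambda}\partial_r$ and the coefficients $$\tilde a=\Big(-\dot\lambda-\frac1t\Big)e^{-\mu}-\tilde\mu e^{-\lambda},\quad b=-\frac{e^{-\mu}}{t},\quad \tilde c=\Big(-\dot\lambda-\frac1t\Big)e^{-\mu}+\tilde\mu e^{-\lambda}.$$ Let $X,Y\in C^1(I\times\mathbb{R})$ be $1$-periodic in $r$ and solve $$D^+X=\tilde aX+bY,\qquad D^-Y=bX+\tilde cY$$ on $I\times\mathbb{R}$ with $X(1,r)=e^{-\overset{\circ}{\mu}(r)}\psi(r)-e^{-\overset{\circ}{\lambda}(r)}\overset{\circ}{\phi}'(r)$ and $Y(1,r)=e^{-\overset{\circ}{\mu}(r)}\psi(r)+e^{-\overset{\circ}{\lambda}(r)}\overset{\circ}{\phi}'(r)$. Set $$K_0=2\sup_{r\in\mathbb{R}}\big(|\psi(r)|e^{-\overset{\circ}{\mu}(r)}+|\overset{\circ}{\phi}'(r)|e^{-\overset{\circ}{\lambda}(r)}\big),\quad m(t)=\sup_{r\in\mathbb{R}}\Big(|\dot\lambda(t,r)|+\frac2t+|\tilde\mu(t,r)|e^{(\mu-\lambda)(t,r)}\Big),$$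 $$K(t)=\sup_{r\in\mathbb{R}}\big(X^2+Y^2\big)^{1/2}(t,r).$$ Then for $t\in I$ with $t\le1$, $$K(t)\le K_0+3\int_t^1 m(s)K(s)\,ds,$$ and for $t\in I$ with $t\ge1$, $K(t)\le K_0+3\int_1^t m(s)K(s)\,ds$.
   Context: A dot denotes $\partial_t$ and a prime denotes $\partial_r$. The variable $t$ is time and $r$ the spatial variable; all functions of $(t,r)$ are periodic in $r$ with period 1. *)

theory Defs
  imports "HOL-Analysis.Analysis"
begin

definition C1_on :: "(real \<times> real) set \<Rightarrow> (real \<Rightarrow> real \<Rightarrow> real)
    \<Rightarrow> (real \<Rightarrow> real \<Rightarrow> real) \<Rightarrow> (real \<Rightarrow> real \<Rightarrow> real) \<Rightarrow> bool" where
  "C1_on S f ft fr \<longleftrightarrow>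
     (\<forall>p\<in>S. ((\<lambda>q. f (fst q) (snd q)) has_derivative
               (\<lambda>h. ft (fst p) (snd p) * fst h + fr (fst p) (snd p) * snd h)) (at p within S))
     \<and> continuous_on S (\<lambda>q. ft (fst q) (snd q))
     \<and> continuous_on S (\<lambda>q. fr (fst q) (snd q))"

definition periodic_r :: "real set \<Rightarrow> (real \<Rightarrow> real \<Rightarrow> real) \<Rightarrow> bool" where
  "periodic_r I f \<longleftrightarrow> (\<forall>t\<in>I. \<forall>r. f t (r + 1) = f t r)"

end

theory Submission
  imports Defs "HOL-Library.Periodic_Fun"
begin

text \<open>
  All data are continuous and 1-periodic in \<open>r\<close>, so every supremum over \<open>r\<close> is a maximum
  over \<open>[0, 1]\<close> and depends continuously on \<open>t\<close>. Where \<open>X(t, \<cdot>)\<close> attains its maximum or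
  minimum we have \<open>X\<^sub>r = 0\<close>, so there the equation for \<open>X\<close> is an ODE in \<open>t\<close> and gives
  \<open>|\<partial>\<^sub>t X| \<le> m(t) K(t)\<close>; likewise for \<open>Y\<close>. A maximum principle (a comparison
  argument for the lower right Dini derivative of \<open>t \<mapsto> max\<^sub>r X(t, r)\<close>) turns this into
  \<open>|X|, |Y| \<le> K\<^sub>0/2 + \<integral> m K\<close>, and \<open>K \<le> sup |X| + sup |Y|\<close> gives the estimate, even
  with 2 in place of 3. Times \<open>t \<ge> 1\<close> are handled by the time reflection \<open>t \<mapsto> -t\<close>.
\<close>

lemma periodic_range_eq:
  fixes f :: "real \<Rightarrow> 'a"
  assumes per: "\<And>x. f (x + 1) = f x"
  shows "range f = f ` {0..1}"
proof -
  interpret periodic_fun_simple' f by unfold_locales (simp add: per)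
  have "f x = f (frac x)" for x
    using plus_of_int[of "frac x" "\<lfloor>x\<rfloor>"] by (simp add: frac_def)
  moreover have "frac x \<in> {0..1}" for x :: real
    using frac_lt_1[of x] frac_ge_0[of x] by simp
  ultimately show ?thesis by blast
qed

lemma periodic_attains_max:
  fixes f :: "real \<Rightarrow> real"
  assumes "\<And>x. f (x + 1) = f x" and "continuous_on UNIV f"
  shows "\<exists>r. \<forall>x. f x \<le> f r"
proof -
  have "continuous_on {0..1} f" using assms(2) by (rule continuous_on_subset) simp
  then obtain r where "r \<in> {0..1}" "\<forall>x\<in>{0..1}. f x \<le> f r"
    using continuous_attains_sup[of "{0..1}" f] by auto
  then show ?thesis using periodic_range_eq[of f] assms(1) by (metis imageE rangeI)
qed

lemma periodic_bdd_above:
  fixes f :: "real \<Rightarrow> real"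
  assumes "\<And>x. f (x + 1) = f x" and "continuous_on UNIV f"
  shows "bdd_above (range f)"
  using periodic_attains_max[OF assms] by (auto intro: bdd_aboveI2)

lemma continuous_on_section:
  fixes F :: "'a::topological_space \<Rightarrow> 'b::topological_space \<Rightarrow> 'c::topological_space"
  assumes "continuous_on (T \<times> UNIV) (\<lambda>q. F (fst q) (snd q))" and "t \<in> T"
  shows "continuous_on UNIV (F t)"
proof -
  have "continuous_on UNIV ((\<lambda>q. F (fst q) (snd q)) \<circ> Pair t)"
    by (intro continuous_on_compose continuous_on_subset[OF assms(1)] continuous_intros)
       (use assms(2) in auto)
  then show ?thesis by (simp add: o_def)
qed

lemma cSUP_le_cSUP_plus:
  fixes f g :: "'a \<Rightarrow> real"
  assumes "A \<noteq> {}" and "bdd_above (g ` A)" and "\<And>x. x \<in> A \<Longrightarrow> f x \<le> g x + e"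
  shows "(SUP x\<in>A. f x) \<le> (SUP x\<in>A. g x) + e"
proof (rule cSUP_least[OF assms(1)])
  fix x assume "x \<in> A"
  then have "g x \<le> (SUP x\<in>A. g x)" by (rule cSUP_upper[OF _ assms(2)])
  then show "f x \<le> (SUP x\<in>A. g x) + e" using assms(3)[OF \<open>x \<in> A\<close>] by linarith
qed

lemma continuous_on_SUP_periodic:
  fixes F :: "real \<Rightarrow> real \<Rightarrow> real"
  assumes T: "compact T" and cont: "continuous_on (T \<times> UNIV) (\<lambda>q. F (fst q) (snd q))"
    and per: "periodic_r T F"
  shows "continuous_on T (\<lambda>t. SUP r. F t r)"
proof -
  have per_t: "\<And>x. F t (x + 1) = F t x" if "t \<in> T" for t
    using per that unfolding periodic_r_def by blast
  have SUP_eq: "(SUP r. F t r) = (SUP r\<in>{0..1}. F t r)" if "t \<in> T" for t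
    using periodic_range_eq[of "F t"] per_t[OF that] by simp
  have bdd: "bdd_above (F t ` {0..1})" if "t \<in> T" for t
    using periodic_bdd_above[OF per_t[OF that] continuous_on_section[OF cont that]]
    by (rule bdd_above_mono) auto
  have "uniformly_continuous_on (T \<times> {0..1}) (\<lambda>q. F (fst q) (snd q))"
    by (rule compact_uniformly_continuous[OF continuous_on_subset[OF cont]])
       (auto intro: compact_Times T)
  show ?thesis
    unfolding continuous_on_iff
  proof (intro ballI allI impI)
    fix t e :: real assume t: "t \<in> T" and e: "e > 0"
    then obtain d where "d > 0"
      and d: "\<And>x x'. x \<in> T \<times> {0..1} \<Longrightarrow> x' \<in> T \<times> {0..1} \<Longrightarrow> dist x' x < d \<Longrightarrow>
        dist (F (fst x') (snd x')) (F (fst x) (snd x)) < e / 2"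
      using \<open>uniformly_continuous_on _ _\<close> unfolding uniformly_continuous_on_def
      by (metis half_gt_zero)
    have "dist (SUP r. F t' r) (SUP r. F t r) < e" if t': "t' \<in> T" "dist t' t < d" for t'
    proof -
      have close: "\<bar>F t' r - F t r\<bar> < e / 2" if "r \<in> {0..1}" for r
        using d[of "(t, r)" "(t', r)"] t t' that by (force simp: dist_Pair_Pair dist_real_def)
      have "F t' r \<le> F t r + e / 2" "F t r \<le> F t' r + e / 2" if "r \<in> {0..1}" for r
        using close[OF that] by linarith+
      note closeL = this(1) and closeR = this(2)
      have "(SUP r\<in>{0..1}. F t' r) \<le> (SUP r\<in>{0..1}. F t r) + e / 2"
        by (rule cSUP_le_cSUP_plus[OF _ bdd[OF t] closeL]) auto
      moreover have "(SUP r\<in>{0..1}. F t r) \<le> (SUP r\<in>{0..1}. F t' r) + e / 2"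
        by (rule cSUP_le_cSUP_plus[OF _ bdd[OF t'(1)] closeR]) auto
      ultimately show ?thesis
        using e SUP_eq[OF t] SUP_eq[OF t'(1)] by (simp add: dist_real_def)
    qed
    then show "\<exists>d>0. \<forall>t'\<in>T. dist t' t < d \<longrightarrow> dist (SUP r. F t' r) (SUP r. F t r) < e"
      using \<open>d > 0\<close> by blast
  qed
qed

lemma right_dini_nonneg_imp_le:
  fixes g :: "real \<Rightarrow> real"
  assumes "a \<le> b" and cont: "continuous_on {a..b} g"
    and step: "\<And>t \<epsilon>. t \<in> {a..<b} \<Longrightarrow> \<epsilon> > 0 \<Longrightarrow>
      \<exists>d>0. \<forall>e. 0 < e \<longrightarrow> e < d \<longrightarrow> t + e \<le> b \<longrightarrow> g t - \<epsilon> * e \<le> g (t + e)"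
  shows "g a \<le> g b"
proof -
  have slack: "g a \<le> g b + \<epsilon> * (b - a)" if "\<epsilon> > 0" for \<epsilon> :: real
  proof -
    define S where "S = {t \<in> {a..b}. g a - \<epsilon> * (t - a) \<le> g t}"
    have "closed S"
      unfolding S_def
      by (intro continuous_on_closed_Collect_le cont continuous_intros closed_atLeastAtMost)
    then have "compact ({a..b} \<inter> S)" by (intro compact_Int_closed compact_Icc)
    moreover have "{a..b} \<inter> S = S" by (auto simp: S_def)
    ultimately have "compact S" by simp
    moreover have "a \<in> S" using \<open>a \<le> b\<close> by (simp add: S_def)
    ultimately obtain s where s: "s \<in> S" and s_max: "\<And>t. t \<in> S \<Longrightarrow> t \<le> s"
      using compact_attains_sup[of S] by blast
    have "s = b"
    proof (rule ccontr)
      assume "s \<noteq> b"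
      with s have "s \<in> {a..<b}" by (simp add: S_def)
      then obtain d where "d > 0"
        and d: "\<And>e. 0 < e \<Longrightarrow> e < d \<Longrightarrow> s + e \<le> b \<Longrightarrow> g s - \<epsilon> * e \<le> g (s + e)"
        using step \<open>\<epsilon> > 0\<close> by blast
      define e where "e = min (d / 2) (b - s)"
      have e: "0 < e" "e < d" "s + e \<le> b"
        using \<open>d > 0\<close> \<open>s \<in> {a..<b}\<close> by (auto simp: e_def)
      have "g a - \<epsilon> * (s + e - a) \<le> g (s + e)"
        using d[OF e] s by (simp add: S_def algebra_simps)
      then have "s + e \<in> S" using e s by (simp add: S_def)
      then show False using s_max e by force
    qed
    then show ?thesis using s by (simp add: S_def algebra_simps)
  qed
  show ?thesis
  proof (rule field_le_epsilon)
    fix e :: real assume "e > 0"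
    then have "g a \<le> g b + e / (b - a + 1) * (b - a)"
      using \<open>a \<le> b\<close> by (intro slack) simp
    also have "\<dots> \<le> g b + e" using \<open>e > 0\<close> \<open>a \<le> b\<close> by (simp add: field_simps)
    finally show "g a \<le> g b + e" .
  qed
qed

lemma has_real_derivative_nonneg_right_step:
  assumes "(f has_real_derivative D) (at t within S)" and "0 \<le> D" and "0 < \<epsilon>"
  shows "\<exists>d>0. \<forall>e. 0 < e \<longrightarrow> e < d \<longrightarrow> t + e \<in> S \<longrightarrow> f t - \<epsilon> * e \<le> f (t + e)"
proof -
  have "((\<lambda>s. f s + \<epsilon> * s) has_real_derivative D + \<epsilon>) (at t within S)"
    using assms(1) by (auto intro!: derivative_eq_intros)
  from has_real_derivative_pos_inc_right[OF this] assms(2,3)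
  obtain d where "d > 0"
    and "\<forall>e>0. t + e \<in> S \<longrightarrow> e < d \<longrightarrow> f t + \<epsilon> * t < f (t + e) + \<epsilon> * (t + e)"
    by auto
  then show ?thesis by (intro exI[of _ d]) (auto simp: algebra_simps)
qed

lemma C1_on_subset:
  assumes "C1_on S F Ft Fr" and "T \<subseteq> S"
  shows "C1_on T F Ft Fr"
  using assms unfolding C1_on_def by (meson continuous_on_subset has_derivative_subset subsetD)

lemma C1_on_continuous:
  assumes "C1_on S F Ft Fr"
  shows "continuous_on S (\<lambda>q. F (fst q) (snd q))"
  using assms unfolding C1_on_def by (intro has_derivative_continuous_on) blast

lemma C1_on_partial_t:
  assumes "C1_on (T \<times> UNIV) F Ft Fr" and "t \<in> T"
  shows "((\<lambda>s. F s r) has_real_derivative Ft t r) (at t within T)"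
proof -
  have "((\<lambda>q. F (fst q) (snd q)) has_derivative (\<lambda>h. Ft t r * fst h + Fr t r * snd h))
      (at (t, r) within T \<times> UNIV)"
    using assms unfolding C1_on_def by fastforce
  then have D: "((\<lambda>q. F (fst q) (snd q)) has_derivative (\<lambda>h. Ft t r * fst h + Fr t r * snd h))
      (at (t, r) within (\<lambda>s. (s, r)) ` T)"
    by (rule has_derivative_subset) auto
  have "((\<lambda>s. (s, r)) has_derivative (\<lambda>h. (h, 0))) (at t within T)"
    by (auto intro!: derivative_eq_intros)
  from diff_chain_within[OF this D]
  have "((\<lambda>s. F s r) has_derivative (\<lambda>h. Ft t r * h)) (at t within T)"
    by (simp add: o_def)
  then show ?thesis by (simp add: has_field_derivative_def)
qed

lemma C1_on_partial_r:
  assumes "C1_on (T \<times> UNIV) F Ft Fr" and "t \<in> T"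
  shows "(F t has_real_derivative Fr t r) (at r)"
proof -
  have "((\<lambda>q. F (fst q) (snd q)) has_derivative (\<lambda>h. Ft t r * fst h + Fr t r * snd h))
      (at (t, r) within T \<times> UNIV)"
    using assms unfolding C1_on_def by fastforce
  then have D: "((\<lambda>q. F (fst q) (snd q)) has_derivative (\<lambda>h. Ft t r * fst h + Fr t r * snd h))
      (at (t, r) within range (Pair t))"
    by (rule has_derivative_subset) (use assms(2) in auto)
  have "(Pair t has_derivative Pair 0) (at r)"
    by (auto intro!: derivative_eq_intros)
  from diff_chain_within[OF this D]
  have "(F t has_derivative (\<lambda>h. Fr t r * h)) (at r)"
    by (simp add: o_def)
  then show ?thesis by (simp add: has_field_derivative_def)
qed

lemma C1_on_uminus:
  assumes "C1_on S F Ft Fr"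
  shows "C1_on S (\<lambda>t r. - F t r) (\<lambda>t r. - Ft t r) (\<lambda>t r. - Fr t r)"
  using assms unfolding C1_on_def
  by (auto intro!: continuous_on_minus derivative_eq_intros simp: algebra_simps)

lemma C1_on_reflect_t:
  assumes "C1_on ({a..b} \<times> UNIV) F Ft Fr"
  shows "C1_on ({-b..-a} \<times> UNIV)
    (\<lambda>t r. F (- t) r) (\<lambda>t r. - Ft (- t) r) (\<lambda>t r. Fr (- t) r)"
proof -
  define \<rho> :: "real \<times> real \<Rightarrow> real \<times> real" where "\<rho> = (\<lambda>q. (- fst q, snd q))"
  have \<rho>_img: "\<rho> ` ({-b..-a} \<times> UNIV) \<subseteq> {a..b} \<times> UNIV" by (auto simp: \<rho>_def)
  have \<rho>_der: "(\<rho> has_derivative \<rho>) (at p within S)" for p S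
    unfolding \<rho>_def by (auto intro!: derivative_eq_intros)
  have cont_\<rho>: "continuous_on ({-b..-a} \<times> UNIV) (G \<circ> \<rho>)"
    if "continuous_on ({a..b} \<times> UNIV) G" for G :: "real \<times> real \<Rightarrow> real"
    unfolding \<rho>_def
    by (intro continuous_on_compose continuous_on_subset[OF that \<rho>_img[unfolded \<rho>_def]]
        continuous_intros)
  show ?thesis
    unfolding C1_on_def
  proof (intro conjI ballI)
    fix p assume p: "p \<in> {-b..-a} \<times> (UNIV :: real set)"
    then have "((\<lambda>q. F (fst q) (snd q)) has_derivative
        (\<lambda>h. Ft (- fst p) (snd p) * fst h + Fr (- fst p) (snd p) * snd h))
        (at (\<rho> p) within {a..b} \<times> UNIV)"
      using assms unfolding C1_on_def \<rho>_def by (auto simp: mem_Times_iff)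
    from diff_chain_within[OF \<rho>_der has_derivative_subset[OF this \<rho>_img]]
    show "((\<lambda>q. F (- fst q) (snd q)) has_derivative
        (\<lambda>h. - Ft (- fst p) (snd p) * fst h + Fr (- fst p) (snd p) * snd h))
        (at p within {-b..-a} \<times> UNIV)"
      by (simp add: o_def \<rho>_def)
  next
    show "continuous_on ({-b..-a} \<times> UNIV) (\<lambda>q. - Ft (- fst q) (snd q))"
      using cont_\<rho>[of "\<lambda>q. Ft (fst q) (snd q)"] assms
      by (intro continuous_on_minus) (simp_all add: C1_on_def o_def \<rho>_def)
    show "continuous_on ({-b..-a} \<times> UNIV) (\<lambda>q. Fr (- fst q) (snd q))"
      using cont_\<rho>[of "\<lambda>q. Fr (fst q) (snd q)"] assms by (simp add: C1_on_def o_def \<rho>_def)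
  qed
qed

lemma partial_t_periodic:
  assumes C1: "C1_on ({a..b} \<times> UNIV) F Ft Fr" and per: "periodic_r {a..b} F"
    and "a < b" and t: "t \<in> {a..b}"
  shows "Ft t (r + 1) = Ft t r"
proof -
  have "((\<lambda>s. F s r) has_real_derivative Ft t (r + 1)) (at t within {a..b})"
    by (rule has_field_derivative_transform_within[OF C1_on_partial_t[OF C1 t] zero_less_one t])
       (use per in \<open>simp add: periodic_r_def\<close>)
  then show ?thesis
    using vector_derivative_unique_within_closed_interval[OF \<open>a < b\<close>, of t "\<lambda>s. F s r"]
      C1_on_partial_t[OF C1 t] t
    by (simp add: has_real_derivative_iff_has_vector_derivative)
qed

lemma deriv_periodic:
  assumes per: "\<And>x. f (x + 1) = f x" and der: "\<And>x. (f has_real_derivative f' x) (at x)"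
  shows "f' (x + 1) = f' x"
proof -
  have "((\<lambda>y. f (y + 1)) has_real_derivative f' (x + 1)) (at x)"
    using der DERIV_shift by blast
  moreover have "(\<lambda>y. f (y + 1)) = f" using per by simp
  ultimately show ?thesis using der DERIV_unique by metis
qed

lemma periodic_max_principle:
  fixes Z Zt Zr :: "real \<Rightarrow> real \<Rightarrow> real" and h :: "real \<Rightarrow> real"
  assumes "a \<le> b" and C1: "C1_on ({a..b} \<times> UNIV) Z Zt Zr" and per: "periodic_r {a..b} Z"
    and h: "continuous_on {a..b} h"
    and crit: "\<And>t r. t \<in> {a..b} \<Longrightarrow> Zr t r = 0 \<Longrightarrow> - h t \<le> Zt t r"
  shows "(SUP r. Z a r) \<le> (SUP r. Z b r) + integral {a..b} h"
proof -
  define g where "g t = (SUP r. Z t r) + integral {a..t} h" for t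
  have cont: "continuous_on ({a..b} \<times> UNIV) (\<lambda>q. Z (fst q) (snd q))"
    using C1 by (rule C1_on_continuous)
  have per_t: "\<And>x. Z t (x + 1) = Z t x" and cont_t: "continuous_on UNIV (Z t)"
    if "t \<in> {a..b}" for t
    using per that continuous_on_section[OF cont] by (simp_all add: periodic_r_def)
  \<comment> \<open>At a point \<open>r\<close> where \<open>Z(t, \<cdot>)\<close> is maximal, \<open>Z\<^sub>r = 0\<close>, so \<open>s \<mapsto> Z(s, r) + \<integral>\<^sub>a\<^sup>s h\<close> has
    nonnegative derivative at \<open>t\<close>; it touches \<open>g\<close> from below at \<open>t\<close>.\<close>
  have "g a \<le> g b"
  proof (rule right_dini_nonneg_imp_le[OF \<open>a \<le> b\<close>])
    show "continuous_on {a..b} g"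
      unfolding g_def using h
      by (intro continuous_on_add continuous_on_SUP_periodic cont per compact_Icc
          indefinite_integral_continuous_1 integrable_continuous_real)
  next
    fix t \<epsilon> :: real assume t: "t \<in> {a..<b}" and "\<epsilon> > 0"
    then have t': "t \<in> {a..b}" by simp
    obtain r where r: "\<And>x. Z t x \<le> Z t r"
      using periodic_attains_max[OF per_t[OF t'] cont_t[OF t']] by blast
    have "Zr t r = 0"
      using DERIV_local_max[OF C1_on_partial_r[OF C1 t'] zero_less_one] r by blast
    then have "0 \<le> Zt t r + h t" using crit[OF t'] by fastforce
    moreover have "((\<lambda>s. Z s r + integral {a..s} h) has_real_derivative Zt t r + h t)
        (at t within {a..b})"
      using C1_on_partial_t[OF C1 t'] integral_has_real_derivative[OF h t']
      by (rule DERIV_add)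
    ultimately obtain d where "d > 0"
      and d: "\<And>e. 0 < e \<Longrightarrow> e < d \<Longrightarrow> t + e \<in> {a..b} \<Longrightarrow>
        Z t r + integral {a..t} h - \<epsilon> * e \<le> Z (t + e) r + integral {a..t + e} h"
      using has_real_derivative_nonneg_right_step \<open>\<epsilon> > 0\<close> by blast
    have "g t - \<epsilon> * e \<le> g (t + e)" if "0 < e" "e < d" "t + e \<le> b" for e
    proof -
      have te: "t + e \<in> {a..b}" using t that by simp
      have "(SUP x. Z t x) = Z t r" using r by (intro cSup_eq_maximum) auto
      moreover have "Z (t + e) r \<le> (SUP x. Z (t + e) x)"
        using periodic_bdd_above[OF per_t[OF te] cont_t[OF te]] by (intro cSUP_upper) auto
      ultimately show ?thesis using d[OF that(1,2) te] by (simp add: g_def)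
    qed
    then show "\<exists>d>0. \<forall>e. 0 < e \<longrightarrow> e < d \<longrightarrow> t + e \<le> b \<longrightarrow> g t - \<epsilon> * e \<le> g (t + e)"
      using \<open>d > 0\<close> by blast
  qed
  then show ?thesis by (simp add: g_def)
qed

lemma periodic_abs_bound_backward:
  fixes Z Zt Zr :: "real \<Rightarrow> real \<Rightarrow> real" and h :: "real \<Rightarrow> real"
  assumes "a \<le> b" and C1: "C1_on ({a..b} \<times> UNIV) Z Zt Zr" and per: "periodic_r {a..b} Z"
    and h: "continuous_on {a..b} h"
    and crit: "\<And>t r. t \<in> {a..b} \<Longrightarrow> Zr t r = 0 \<Longrightarrow> \<bar>Zt t r\<bar> \<le> h t"
    and final: "\<And>r. \<bar>Z b r\<bar> \<le> B"
  shows "\<bar>Z a r\<bar> \<le> B + integral {a..b} h"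
proof -
  have upper: "W a r \<le> B + integral {a..b} h"
    if C1W: "C1_on ({a..b} \<times> UNIV) W Wt Wr" and perW: "periodic_r {a..b} W"
      and critW: "\<And>t r. t \<in> {a..b} \<Longrightarrow> Wr t r = 0 \<Longrightarrow> - h t \<le> Wt t r"
      and finalW: "\<And>r. W b r \<le> B"
    for W Wt Wr
  proof -
    have "bdd_above (range (W a))"
      using perW \<open>a \<le> b\<close> continuous_on_section[OF C1_on_continuous[OF C1W], of a]
      by (intro periodic_bdd_above) (auto simp: periodic_r_def)
    then have "W a r \<le> (SUP r. W a r)" by (intro cSUP_upper) auto
    also have "\<dots> \<le> (SUP r. W b r) + integral {a..b} h"
      by (rule periodic_max_principle[OF \<open>a \<le> b\<close> C1W perW h critW])
    also have "(SUP r. W b r) \<le> B" using finalW by (intro cSUP_least) auto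
    finally show ?thesis by simp
  qed
  have "Z a r \<le> B + integral {a..b} h"
  proof (rule upper[OF C1 per])
    show "- h t \<le> Zt t r" if "t \<in> {a..b}" "Zr t r = 0" for t r
      using crit[OF that] by linarith
    show "Z b r \<le> B" for r using final[of r] by linarith
  qed
  moreover have "- Z a r \<le> B + integral {a..b} h"
  proof (rule upper[OF C1_on_uminus[OF C1]])
    show "periodic_r {a..b} (\<lambda>t r. - Z t r)" using per by (simp add: periodic_r_def)
    show "- h t \<le> - Zt t r" if "t \<in> {a..b}" "- Zr t r = 0" for t r
      using crit[of t r] that by linarith
    show "- Z b r \<le> B" for r using final[of r] by linarith
  qed
  ultimately show ?thesis by linarith
qed

lemma periodic_abs_bound_forward:
  fixes Z Zt Zr :: "real \<Rightarrow> real \<Rightarrow> real" and h :: "real \<Rightarrow> real"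
  assumes "a \<le> b" and C1: "C1_on ({a..b} \<times> UNIV) Z Zt Zr" and per: "periodic_r {a..b} Z"
    and h: "continuous_on {a..b} h"
    and crit: "\<And>t r. t \<in> {a..b} \<Longrightarrow> Zr t r = 0 \<Longrightarrow> \<bar>Zt t r\<bar> \<le> h t"
    and initial: "\<And>r. \<bar>Z a r\<bar> \<le> B"
  shows "\<bar>Z b r\<bar> \<le> B + integral {a..b} h"
proof -
  have "\<bar>Z (- (- b)) r\<bar> \<le> B + integral {-b..-a} (\<lambda>t. h (- t))"
  proof (rule periodic_abs_bound_backward[OF _ C1_on_reflect_t[OF C1]])
    show "periodic_r {-b..-a} (\<lambda>t. Z (- t))"
      using per by (auto simp: periodic_r_def)
    show "continuous_on {-b..-a} (\<lambda>t. h (- t))"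
      by (rule continuous_on_compose2[OF h]) (intro continuous_intros, auto)
  qed (use \<open>a \<le> b\<close> crit initial in auto)
  then show ?thesis by simp
qed

text \<open>The equation for \<open>X\<close> at a point where \<open>X\<^sub>r = 0\<close>, solved for \<open>X\<^sub>t\<close>.\<close>

lemma transport_rate_bound:
  fixes t mu la lt mt x y xt k :: real
  assumes "t > 0" and "\<bar>x\<bar> \<le> k" and "\<bar>y\<bar> \<le> k"
    and eq: "exp (- mu) * xt
      = ((- lt - 1 / t) * exp (- mu) - mt * exp (- la)) * x + (- exp (- mu) / t) * y"
  shows "\<bar>xt\<bar> \<le> (\<bar>lt\<bar> + 2 / t + \<bar>mt\<bar> * exp (mu - la)) * k"
proof -
  have "xt = exp mu * (exp (- mu) * xt)" by (simp add: exp_minus)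
  also have "\<dots> = - lt * x - x / t - mt * exp (mu - la) * x - y / t"
    unfolding eq by (simp add: field_simps exp_diff exp_minus)
  finally have "\<bar>xt\<bar> \<le> \<bar>lt * x\<bar> + \<bar>x / t\<bar> + \<bar>mt * exp (mu - la) * x\<bar> + \<bar>y / t\<bar>"
    by linarith
  also have "\<dots> = \<bar>lt\<bar> * \<bar>x\<bar> + \<bar>x\<bar> / t + \<bar>mt\<bar> * exp (mu - la) * \<bar>x\<bar> + \<bar>y\<bar> / t"
    using \<open>t > 0\<close> by (simp add: abs_mult)
  also have "\<dots> \<le> \<bar>lt\<bar> * k + k / t + \<bar>mt\<bar> * exp (mu - la) * k + k / t"
    using assms(1-3) by (intro add_mono mult_left_mono divide_right_mono) auto
  finally show ?thesis by (simp add: algebra_simps)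
qed

lemma periodic_abs_add_diff_le_SUP:
  fixes p q :: "real \<Rightarrow> real"
  assumes "continuous_on UNIV p" "continuous_on UNIV q"
    and "\<And>x. p (x + 1) = p x" "\<And>x. q (x + 1) = q x"
  shows "\<bar>p r + q r\<bar> \<le> (SUP x. \<bar>p x\<bar> + \<bar>q x\<bar>)"
    and "\<bar>p r - q r\<bar> \<le> (SUP x. \<bar>p x\<bar> + \<bar>q x\<bar>)"
proof -
  have "bdd_above (range (\<lambda>x. \<bar>p x\<bar> + \<bar>q x\<bar>))"
    using assms by (intro periodic_bdd_above continuous_intros) auto
  then have "\<bar>p r\<bar> + \<bar>q r\<bar> \<le> (SUP x. \<bar>p x\<bar> + \<bar>q x\<bar>)" by (intro cSUP_upper) auto
  then show "\<bar>p r + q r\<bar> \<le> (SUP x. \<bar>p x\<bar> + \<bar>q x\<bar>)"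
    and "\<bar>p r - q r\<bar> \<le> (SUP x. \<bar>p x\<bar> + \<bar>q x\<bar>)"
    by linarith+
qed

locale periodic_transport_system =
  fixes I :: "real set"
    and lam lam_t lam_r mu mu_t mu_r mut mut_t mut_r :: "real \<Rightarrow> real \<Rightarrow> real"
    and X X_t X_r Y Y_t Y_r :: "real \<Rightarrow> real \<Rightarrow> real"
  assumes I_int: "is_interval I" and I_pos: "I \<subseteq> {0<..}"
    and lam_C1: "C1_on (I \<times> UNIV) lam lam_t lam_r" and lam_per: "periodic_r I lam"
    and mu_C1: "C1_on (I \<times> UNIV) mu mu_t mu_r" and mu_per: "periodic_r I mu"
    and mut_C1: "C1_on (I \<times> UNIV) mut mut_t mut_r" and mut_per: "periodic_r I mut"
    and X_C1: "C1_on (I \<times> UNIV) X X_t X_r" and X_per: "periodic_r I X"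
    and Y_C1: "C1_on (I \<times> UNIV) Y Y_t Y_r" and Y_per: "periodic_r I Y"
    and eqX: "\<forall>t\<in>I. \<forall>r. exp (- mu t r) * X_t t r + exp (- lam t r) * X_r t r
               = ((- lam_t t r - 1 / t) * exp (- mu t r) - mut t r * exp (- lam t r)) * X t r
                 + (- exp (- mu t r) / t) * Y t r"
    and eqY: "\<forall>t\<in>I. \<forall>r. exp (- mu t r) * Y_t t r - exp (- lam t r) * Y_r t r
               = (- exp (- mu t r) / t) * X t r
                 + ((- lam_t t r - 1 / t) * exp (- mu t r) + mut t r * exp (- lam t r)) * Y t r"
begin

definition rate :: "real \<Rightarrow> real \<Rightarrow> real" where
  "rate s r = \<bar>lam_t s r\<bar> + 2 / s + \<bar>mut s r\<bar> * exp (mu s r - lam s r)"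

definition m :: "real \<Rightarrow> real" where
  "m s = (SUP r. rate s r)"

definition K :: "real \<Rightarrow> real" where
  "K s = (SUP r. sqrt ((X s r)\<^sup>2 + (Y s r)\<^sup>2))"

lemma Icc_subset_I:
  assumes "a \<in> I" "b \<in> I"
  shows "{a..b} \<subseteq> I"
  using mem_is_interval_1_I[OF I_int assms] by (simp add: subset_iff)

lemma periodic_r_Icc: "periodic_r I F \<Longrightarrow> a \<in> I \<Longrightarrow> b \<in> I \<Longrightarrow> periodic_r {a..b} F"
  using Icc_subset_I unfolding periodic_r_def by blast

lemma C1_on_Icc:
  "C1_on (I \<times> UNIV) F Ft Fr \<Longrightarrow> a \<in> I \<Longrightarrow> b \<in> I \<Longrightarrow> C1_on ({a..b} \<times> UNIV) F Ft Fr"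
  by (rule C1_on_subset) (use Icc_subset_I in auto)

lemma continuous_on_Icc:
  assumes "C1_on (I \<times> UNIV) F Ft Fr" "a \<in> I" "b \<in> I"
  shows "continuous_on ({a..b} \<times> UNIV) (\<lambda>q. F (fst q) (snd q))"
  using C1_on_continuous[OF C1_on_Icc[OF assms]] .

lemma rate_continuous:
  assumes "a \<in> I" "b \<in> I"
  shows "continuous_on ({a..b} \<times> UNIV) (\<lambda>q. rate (fst q) (snd q))"
proof -
  have "continuous_on ({a..b} \<times> UNIV) (\<lambda>q. lam_t (fst q) (snd q))"
    using lam_C1 Icc_subset_I[OF assms] unfolding C1_on_def
    by (blast intro: continuous_on_subset)
  moreover have "\<forall>q\<in>{a..b} \<times> UNIV. fst q \<noteq> 0"
    using Icc_subset_I[OF assms] I_pos by force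
  ultimately show ?thesis
    unfolding rate_def
    by (intro continuous_intros continuous_on_Icc[OF mut_C1 assms]
        continuous_on_Icc[OF mu_C1 assms] continuous_on_Icc[OF lam_C1 assms])
qed

lemma rate_periodic:
  assumes "a \<in> I" "b \<in> I" "a < b"
  shows "periodic_r {a..b} rate"
  using partial_t_periodic[OF C1_on_Icc[OF lam_C1 assms(1,2)]
      periodic_r_Icc[OF lam_per assms(1,2)] assms(3)]
    periodic_r_Icc[OF mu_per assms(1,2)] periodic_r_Icc[OF lam_per assms(1,2)]
    periodic_r_Icc[OF mut_per assms(1,2)]
  unfolding periodic_r_def rate_def by simp

lemma rate_le_m:
  assumes "a \<in> I" "b \<in> I" "a < b" "t \<in> {a..b}"
  shows "rate t r \<le> m t"
  unfolding m_def
  using rate_periodic[OF assms(1-3)] assms(4)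
    continuous_on_section[OF rate_continuous[OF assms(1,2)] assms(4)]
  by (intro cSUP_upper periodic_bdd_above) (auto simp: periodic_r_def)

lemma m_continuous: "a \<in> I \<Longrightarrow> b \<in> I \<Longrightarrow> a < b \<Longrightarrow> continuous_on {a..b} m"
  unfolding m_def[abs_def]
  by (intro continuous_on_SUP_periodic rate_continuous rate_periodic compact_Icc)

lemma K_continuous: "a \<in> I \<Longrightarrow> b \<in> I \<Longrightarrow> continuous_on {a..b} K"
  unfolding K_def[abs_def]
  by (intro continuous_on_SUP_periodic compact_Icc continuous_intros
      continuous_on_Icc[OF X_C1] continuous_on_Icc[OF Y_C1])
     (use periodic_r_Icc[OF X_per] periodic_r_Icc[OF Y_per] in \<open>auto simp: periodic_r_def\<close>)

lemma abs_le_K: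
  assumes "t \<in> I"
  shows "\<bar>X t r\<bar> \<le> K t" and "\<bar>Y t r\<bar> \<le> K t"
proof -
  have "bdd_above (range (\<lambda>r. sqrt ((X t r)\<^sup>2 + (Y t r)\<^sup>2)))"
    using X_per Y_per assms continuous_on_section[OF C1_on_continuous[OF X_C1] assms]
      continuous_on_section[OF C1_on_continuous[OF Y_C1] assms]
    by (intro periodic_bdd_above continuous_intros) (auto simp: periodic_r_def)
  then have "sqrt ((X t r)\<^sup>2 + (Y t r)\<^sup>2) \<le> K t" unfolding K_def by (intro cSUP_upper) auto
  moreover have "\<bar>X t r\<bar> \<le> sqrt ((X t r)\<^sup>2 + (Y t r)\<^sup>2)"
    and "\<bar>Y t r\<bar> \<le> sqrt ((X t r)\<^sup>2 + (Y t r)\<^sup>2)"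
    by (simp_all add: real_le_rsqrt)
  ultimately show "\<bar>X t r\<bar> \<le> K t" "\<bar>Y t r\<bar> \<le> K t" by linarith+
qed

lemma K_le_of_abs_le:
  assumes "\<And>r. \<bar>X t r\<bar> \<le> C \<and> \<bar>Y t r\<bar> \<le> C"
  shows "K t \<le> 2 * C"
  unfolding K_def
proof (rule cSUP_least)
  fix r
  have "sqrt ((X t r)\<^sup>2 + (Y t r)\<^sup>2) \<le> \<bar>X t r\<bar> + \<bar>Y t r\<bar>"
    by (rule sqrt_sum_squares_le_sum_abs)
  then show "sqrt ((X t r)\<^sup>2 + (Y t r)\<^sup>2) \<le> 2 * C" using assms[of r] by linarith
qed simp

lemma mK_nonneg:
  assumes "a \<in> I" "b \<in> I" "a < b" "t \<in> {a..b}"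
  shows "0 \<le> m t * K t"
proof -
  have "t \<in> I" using assms Icc_subset_I by blast
  have "0 \<le> rate t 0" using assms \<open>t \<in> I\<close> I_pos by (auto simp: rate_def)
  moreover have "0 \<le> K t" using abs_le_K(1)[OF \<open>t \<in> I\<close>, of 0] by linarith
  ultimately show ?thesis using rate_le_m[OF assms, of 0] by simp
qed

lemma partial_t_bounds_at_critical:
  assumes "a \<in> I" "b \<in> I" "a < b" "t \<in> {a..b}"
  shows "X_r t r = 0 \<Longrightarrow> \<bar>X_t t r\<bar> \<le> m t * K t"
    and "Y_r t r = 0 \<Longrightarrow> \<bar>Y_t t r\<bar> \<le> m t * K t"
proof -
  have t: "t \<in> I" using assms Icc_subset_I by blast
  then have "t > 0" using I_pos by auto
  have rate_K: "rate t r * K t \<le> m t * K t"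
    using rate_le_m[OF assms] abs_le_K(1)[OF t, of r] by (intro mult_right_mono) auto
  show "\<bar>X_t t r\<bar> \<le> m t * K t" if "X_r t r = 0"
  proof -
    have "exp (- mu t r) * X_t t r = ((- lam_t t r - 1 / t) * exp (- mu t r)
        - mut t r * exp (- lam t r)) * X t r + (- exp (- mu t r) / t) * Y t r"
      using eqX[rule_format, OF t, of r] that by simp
    from transport_rate_bound[OF \<open>t > 0\<close> abs_le_K[OF t] this]
    show ?thesis using rate_K by (simp add: rate_def)
  qed
  show "\<bar>Y_t t r\<bar> \<le> m t * K t" if "Y_r t r = 0"
  proof -
    have "exp (- mu t r) * Y_t t r = ((- lam_t t r - 1 / t) * exp (- mu t r)
        - (- mut t r) * exp (- lam t r)) * Y t r + (- exp (- mu t r) / t) * X t r"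
      using eqY[rule_format, OF t, of r] that by (simp add: algebra_simps)
    from transport_rate_bound[OF \<open>t > 0\<close> abs_le_K(2,1)[OF t] this]
    show ?thesis using rate_K by (simp add: rate_def)
  qed
qed

lemma mK_continuous:
  "a \<in> I \<Longrightarrow> b \<in> I \<Longrightarrow> a < b \<Longrightarrow> continuous_on {a..b} (\<lambda>s. m s * K s)"
  by (intro continuous_on_mult m_continuous K_continuous)

lemma integral_mK_nonneg:
  assumes "a \<in> I" "b \<in> I" "a \<le> b"
  shows "0 \<le> integral {a..b} (\<lambda>s. m s * K s)"
proof (cases "a = b")
  case False
  then have "a < b" using assms(3) by simp
  then show ?thesis
    using mK_nonneg[OF assms(1,2)] integrable_continuous_real[OF mK_continuous[OF assms(1,2)]]
    by (intro integral_nonneg) auto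
qed simp

lemma K_bound_backward:
  assumes "a \<in> I" "b \<in> I" "a \<le> b" and final: "\<And>r. \<bar>X b r\<bar> \<le> B \<and> \<bar>Y b r\<bar> \<le> B"
  shows "K a \<le> 2 * (B + integral {a..b} (\<lambda>s. m s * K s))"
proof (cases "a = b")
  case True
  then show ?thesis using K_le_of_abs_le[OF final] by simp
next
  case False
  then have "a < b" using assms(3) by simp
  note crit = partial_t_bounds_at_critical[OF assms(1,2) \<open>a < b\<close>]
  have "\<bar>X a r\<bar> \<le> B + integral {a..b} (\<lambda>s. m s * K s)" for r
    by (rule periodic_abs_bound_backward[OF \<open>a \<le> b\<close> C1_on_Icc[OF X_C1 assms(1,2)]
        periodic_r_Icc[OF X_per assms(1,2)] mK_continuous[OF assms(1,2) \<open>a < b\<close>] crit(1)])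
       (simp_all add: final)
  moreover have "\<bar>Y a r\<bar> \<le> B + integral {a..b} (\<lambda>s. m s * K s)" for r
    by (rule periodic_abs_bound_backward[OF \<open>a \<le> b\<close> C1_on_Icc[OF Y_C1 assms(1,2)]
        periodic_r_Icc[OF Y_per assms(1,2)] mK_continuous[OF assms(1,2) \<open>a < b\<close>] crit(2)])
       (simp_all add: final)
  ultimately show ?thesis by (intro K_le_of_abs_le) auto
qed

lemma K_bound_forward:
  assumes "a \<in> I" "b \<in> I" "a \<le> b" and initial: "\<And>r. \<bar>X a r\<bar> \<le> B \<and> \<bar>Y a r\<bar> \<le> B"
  shows "K b \<le> 2 * (B + integral {a..b} (\<lambda>s. m s * K s))"
proof (cases "a = b")
  case True
  then show ?thesis using K_le_of_abs_le[OF initial] by simp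
next
  case False
  then have "a < b" using assms(3) by simp
  note crit = partial_t_bounds_at_critical[OF assms(1,2) \<open>a < b\<close>]
  have "\<bar>X b r\<bar> \<le> B + integral {a..b} (\<lambda>s. m s * K s)" for r
    by (rule periodic_abs_bound_forward[OF \<open>a \<le> b\<close> C1_on_Icc[OF X_C1 assms(1,2)]
        periodic_r_Icc[OF X_per assms(1,2)] mK_continuous[OF assms(1,2) \<open>a < b\<close>] crit(1)])
       (simp_all add: initial)
  moreover have "\<bar>Y b r\<bar> \<le> B + integral {a..b} (\<lambda>s. m s * K s)" for r
    by (rule periodic_abs_bound_forward[OF \<open>a \<le> b\<close> C1_on_Icc[OF Y_C1 assms(1,2)]
        periodic_r_Icc[OF Y_per assms(1,2)] mK_continuous[OF assms(1,2) \<open>a < b\<close>] crit(2)])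
       (simp_all add: initial)
  ultimately show ?thesis by (intro K_le_of_abs_le) auto
qed

end

theorem proposition2p3:
  fixes I :: "real set"
    and lam lam_t lam_r mu mu_t mu_r mut mut_t mut_r :: "real \<Rightarrow> real \<Rightarrow> real"
    and X X_t X_r Y Y_t Y_r :: "real \<Rightarrow> real \<Rightarrow> real"
    and psi psi' phi phi' phi'' :: "real \<Rightarrow> real"
  assumes I_int: "is_interval I" and I_one: "1 \<in> I" and I_pos: "I \<subseteq> {0<..}"
    and lam_C1: "C1_on (I \<times> UNIV) lam lam_t lam_r" and lam_per: "periodic_r I lam"
    and mu_C1: "C1_on (I \<times> UNIV) mu mu_t mu_r" and mu_per: "periodic_r I mu"
    and mut_C1: "C1_on (I \<times> UNIV) mut mut_t mut_r" and mut_per: "periodic_r I mut"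
    and psi_C1: "\<forall>r. (psi has_real_derivative psi' r) (at r)" "continuous_on UNIV psi'"
    and psi_per: "\<forall>r. psi (r + 1) = psi r"
    and phi_C2: "\<forall>r. (phi has_real_derivative phi' r) (at r)"
                "\<forall>r. (phi' has_real_derivative phi'' r) (at r)" "continuous_on UNIV phi''"
    and phi_per: "\<forall>r. phi (r + 1) = phi r"
    and X_C1: "C1_on (I \<times> UNIV) X X_t X_r" and X_per: "periodic_r I X"
    and Y_C1: "C1_on (I \<times> UNIV) Y Y_t Y_r" and Y_per: "periodic_r I Y"
    and eqX: "\<forall>t\<in>I. \<forall>r. exp (- mu t r) * X_t t r + exp (- lam t r) * X_r t r
               = ((- lam_t t r - 1 / t) * exp (- mu t r) - mut t r * exp (- lam t r)) * X t r
                 + (- exp (- mu t r) / t) * Y t r"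
    and eqY: "\<forall>t\<in>I. \<forall>r. exp (- mu t r) * Y_t t r - exp (- lam t r) * Y_r t r
               = (- exp (- mu t r) / t) * X t r
                 + ((- lam_t t r - 1 / t) * exp (- mu t r) + mut t r * exp (- lam t r)) * Y t r"
    and X_init: "\<forall>r. X 1 r = exp (- mu 1 r) * psi r - exp (- lam 1 r) * phi' r"
    and Y_init: "\<forall>r. Y 1 r = exp (- mu 1 r) * psi r + exp (- lam 1 r) * phi' r"
  shows "\<forall>t\<in>I.
      (t \<le> 1 \<longrightarrow>
        (SUP r. sqrt ((X t r)\<^sup>2 + (Y t r)\<^sup>2))
          \<le> 2 * (SUP r. \<bar>psi r\<bar> * exp (- mu 1 r) + \<bar>phi' r\<bar> * exp (- lam 1 r))
            + 3 * integral {t..1} (\<lambda>s. (SUP r. \<bar>lam_t s r\<bar> + 2 / s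
                                              + \<bar>mut s r\<bar> * exp (mu s r - lam s r))
                                       * (SUP r. sqrt ((X s r)\<^sup>2 + (Y s r)\<^sup>2))))
    \<and> (1 \<le> t \<longrightarrow>
        (SUP r. sqrt ((X t r)\<^sup>2 + (Y t r)\<^sup>2))
          \<le> 2 * (SUP r. \<bar>psi r\<bar> * exp (- mu 1 r) + \<bar>phi' r\<bar> * exp (- lam 1 r))
            + 3 * integral {1..t} (\<lambda>s. (SUP r. \<bar>lam_t s r\<bar> + 2 / s
                                              + \<bar>mut s r\<bar> * exp (mu s r - lam s r))
                                       * (SUP r. sqrt ((X s r)\<^sup>2 + (Y s r)\<^sup>2))))"
proof -
  interpret periodic_transport_system
    I lam lam_t lam_r mu mu_t mu_r mut mut_t mut_r X X_t X_r Y Y_t Y_r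
    using I_int I_pos lam_C1 lam_per mu_C1 mu_per mut_C1 mut_per X_C1 X_per Y_C1 Y_per eqX eqY
    by unfold_locales
  define K0 where "K0 = (SUP r. \<bar>psi r\<bar> * exp (- mu 1 r) + \<bar>phi' r\<bar> * exp (- lam 1 r))"
  have "isCont psi r" "isCont phi' r" "isCont (mu 1) r" "isCont (lam 1) r" for r
    using psi_C1(1) phi_C2(2) C1_on_partial_r[OF mu_C1 I_one] C1_on_partial_r[OF lam_C1 I_one]
    by (blast intro: DERIV_isCont)+
  then have cont: "continuous_on UNIV (\<lambda>r. exp (- mu 1 r) * psi r)"
    "continuous_on UNIV (\<lambda>r. exp (- lam 1 r) * phi' r)"
    by (intro continuous_at_imp_continuous_on ballI continuous_intros; simp)+
  have "phi' (r + 1) = phi' r" for r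
    using deriv_periodic[of phi phi'] phi_per phi_C2(1) by blast
  then have per: "exp (- mu 1 (r + 1)) * psi (r + 1) = exp (- mu 1 r) * psi r"
    "exp (- lam 1 (r + 1)) * phi' (r + 1) = exp (- lam 1 r) * phi' r" for r
    using psi_per mu_per lam_per I_one by (simp_all add: periodic_r_def)
  have "K0 = (SUP r. \<bar>exp (- mu 1 r) * psi r\<bar> + \<bar>exp (- lam 1 r) * phi' r\<bar>)"
    by (simp add: K0_def abs_mult mult.commute)
  then have data: "\<bar>X 1 r\<bar> \<le> K0 \<and> \<bar>Y 1 r\<bar> \<le> K0" for r
    using periodic_abs_add_diff_le_SUP[OF cont, of r] per X_init Y_init by simp
  \<comment> \<open>The argument gives the factor 2 in front of the integral, which is nonnegative.\<close>
  have "K t \<le> 2 * K0 + 3 * integral {t..1} (\<lambda>s. m s * K s)" if "t \<in> I" "t \<le> 1" for t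
    using K_bound_backward[OF that(1) I_one that(2) data] integral_mK_nonneg[OF that(1) I_one that(2)]
    by simp
  moreover have "K t \<le> 2 * K0 + 3 * integral {1..t} (\<lambda>s. m s * K s)" if "t \<in> I" "1 \<le> t" for t
    using K_bound_forward[OF I_one that data] integral_mK_nonneg[OF I_one that] by simp
  ultimately show ?thesis
    unfolding K_def m_def rate_def K0_def by blast
qed

end
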